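(* Let $n\ge3$, $N=\binom n2$, fix distinct $s,t\in[n]$, and let $S=\{\{u,v\}:u\in\{s,t\},v\in[n]\setminus\{s,t\}\}$. For $w\in\mathbb{R}^N$ let $F(w)=\arg\min_{y\in\{-1,1\}^n,\ y_s=1,\ y_t=-1}\sum_{\{i,j\}}w_{\{i,j\}}(1-y_iy_j)$. Let $w\in\mathbb{R}^N$ be such that this minimizer is unique, call it $f(w)$, and let $w'$ differ from $w$ only on one pair $\{u,v\}$, by $z\in[-1,1]$. Then there exists $a\in\mathbb{R}^N$ supported on $S$, with $\|a\|_1\le2$, which depends only on $f(w)$, the pair $\{u,v\}$ and $z$, such that $F(w'+a)$ has the unique minimizer $f(w)$. In other words, $S$ is a dominating set of sensitivity $2$ for the (unique) minimum $s$-$t$ cut function $f$.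
   Context: A vector $y\in\{-1,1\}^n$ with $y_s=1,y_t=-1$ encodes an $s$-$t$ cut (the two sides being $\{i:y_i=1\}$ and $\{i:y_i=-1\}$); $\sum w_{\{i,j\}}(1-y_iy_j)$ is twice the weight of the cut for weight vector $w$ indexed by unordered pairs of $[n]$. *)

theory Defs
  imports Complex_Main
begin

text \<open>Vertices are [n] = {0..<n}. Unordered pairs are represented as two-element sets.
  A weight vector in R^N, N = n choose 2, is a function on nat sets; only its values on
  pairs n matter.\<close>

definition pairs :: "nat \<Rightarrow> nat set set" where
  "pairs n = {{i, j} | i j. i < n \<and> j < n \<and> i \<noteq> j}"

definition cuts :: "nat \<Rightarrow> nat \<Rightarrow> nat \<Rightarrow> (nat \<Rightarrow> real) set" where
  "cuts n s t = {y. (\<forall>i<n. y i = 1 \<or> y i = -1) \<and> (\<forall>i\<ge>n. y i = 0) \<and> y s = 1 \<and> y t = -1}"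

definition cut_cost :: "nat \<Rightarrow> (nat set \<Rightarrow> real) \<Rightarrow> (nat \<Rightarrow> real) \<Rightarrow> real" where
  "cut_cost n w y = (\<Sum>(i, j) \<in> {(i, j). i < j \<and> j < n}. w {i, j} * (1 - y i * y j))"

definition argmin_cuts :: "nat \<Rightarrow> nat \<Rightarrow> nat \<Rightarrow> (nat set \<Rightarrow> real) \<Rightarrow> (nat \<Rightarrow> real) set" where
  "argmin_cuts n s t w =
     {y \<in> cuts n s t. \<forall>y' \<in> cuts n s t. cut_cost n w y \<le> cut_cost n w y'}"

definition dom_pairs :: "nat \<Rightarrow> nat \<Rightarrow> nat \<Rightarrow> nat set set" where
  "dom_pairs n s t = {{u, v} | u v. u \<in> {s, t} \<and> v < n \<and> v \<notin> {s, t}}"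

definition l1norm :: "nat \<Rightarrow> (nat set \<Rightarrow> real) \<Rightarrow> real" where
  "l1norm n a = (\<Sum>e \<in> pairs n. \<bar>a e\<bar>)"

end

theory Submission
  imports Defs
begin

text \<open>Changing w on the pair {u,v} by z changes the cost of a cut y by z(1 - y_u y_v). If this
  increases the cost of the old optimum y0 relative to some cut (z \<ge> 0 and u,v separated by y0,
  or z < 0 and u,v on one side), pin every endpoint x \<notin> {s,t} of {u,v} to its side in y0 by
  adding |z| to the edge joining x to s or t accordingly. This costs |z|(1 - y0_x y_x) on a cut y,
  which vanishes at y0 and, over both endpoints, outweighs any gain z(1 - y_u y_v) - z(1 - y0_u y0_v)
  a competing cut could make; so y0 stays the unique optimum, and at most two edges of S get
  weight |z| \<le> 1.\<close>

lemma finite_ordered_pairs: "finite {(i, j). i < j \<and> j < (n::nat)}"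
  by (rule finite_subset[of _ "{..<n} \<times> {..<n}"]) auto

lemma finite_pairs: "finite (pairs n)"
  by (rule finite_subset[of _ "Pow {..<n}"]) (auto simp: pairs_def)

lemma cut_cost_add: "cut_cost n (\<lambda>e. f e + g e) y = cut_cost n f y + cut_cost n g y"
  unfolding cut_cost_def by (simp add: case_prod_beta distrib_right sum.distrib)

lemma cut_cost_sum: "cut_cost n (\<lambda>e. \<Sum>x\<in>X. g x e) y = (\<Sum>x\<in>X. cut_cost n (g x) y)"
  unfolding cut_cost_def by (simp add: case_prod_beta sum_distrib_right sum.swap[of _ X])

lemma cut_cost_single_edge:
  assumes "a \<noteq> b" "a < n" "b < n"
  shows "cut_cost n (\<lambda>e. if e = {a, b} then c else 0) y = c * (1 - y a * y b)"
proof -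
  let ?m = "(min a b, max a b)"
  have "cut_cost n (\<lambda>e. if e = {a, b} then c else 0) y =
     (\<Sum>p\<in>{(i, j). i < j \<and> j < n}. if p = ?m then c * (1 - y a * y b) else 0)"
    unfolding cut_cost_def
  proof (rule sum.cong[OF refl])
    fix p assume "p \<in> {(i, j). i < j \<and> j < n}"
    then obtain i j where p: "p = (i, j)" "i < j" by auto
    then have "({i, j} = {a, b}) = (p = ?m)" using assms(1)
      by (auto simp: doubleton_eq_iff min_def max_def)
    then show "(case p of (i, j) \<Rightarrow> (if {i, j} = {a, b} then c else 0) * (1 - y i * y j)) =
        (if p = ?m then c * (1 - y a * y b) else 0)"
      using p assms(1) by (auto simp: min_def max_def)
  qed
  also have "\<dots> = c * (1 - y a * y b)"
    using finite_ordered_pairs[of n] assms by (simp add: min_def max_def)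
  finally show ?thesis .
qed

lemma cuts_values:
  assumes "y \<in> cuts n s t"
  shows "\<And>i. i < n \<Longrightarrow> y i = 1 \<or> y i = -1" and "y s = 1" and "y t = -1"
  using assms unfolding cuts_def by auto

lemma argmin_cuts_add_penalty:
  assumes "argmin_cuts n s t w = {y0}"
    and "\<And>y. y \<in> cuts n s t \<Longrightarrow>
      cut_cost n w' y0 - cut_cost n w y0 \<le> cut_cost n w' y - cut_cost n w y"
  shows "argmin_cuts n s t w' = {y0}"
proof -
  have y0: "y0 \<in> cuts n s t" "\<And>y. y \<in> cuts n s t \<Longrightarrow> cut_cost n w y0 \<le> cut_cost n w y"
    using assms(1) unfolding argmin_cuts_def by auto
  have strict: "cut_cost n w' y0 < cut_cost n w' y" if y: "y \<in> cuts n s t" "y \<noteq> y0" for y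
  proof -
    have "y \<notin> argmin_cuts n s t w" using assms(1) y(2) by auto
    then obtain y' where "y' \<in> cuts n s t" "cut_cost n w y' < cut_cost n w y"
      using y(1) unfolding argmin_cuts_def by auto
    with y0(2) have "cut_cost n w y0 < cut_cost n w y" by force
    with assms(2)[OF y(1)] show ?thesis by linarith
  qed
  have "cut_cost n w' y0 \<le> cut_cost n w' y" if "y \<in> cuts n s t" for y
    using strict[OF that] by (cases "y = y0") auto
  with y0(1) strict show ?thesis
    unfolding argmin_cuts_def by (auto simp: not_le[symmetric])
qed

definition anchor_edge :: "nat \<Rightarrow> nat \<Rightarrow> (nat \<Rightarrow> real) \<Rightarrow> nat \<Rightarrow> nat set" where
  "anchor_edge s t y0 x = {if y0 x = 1 then s else t, x}"

definition anchor_weights ::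
    "nat \<Rightarrow> nat \<Rightarrow> (nat \<Rightarrow> real) \<Rightarrow> nat set \<Rightarrow> real \<Rightarrow> nat set \<Rightarrow> real" where
  "anchor_weights s t y0 X c e = (\<Sum>x\<in>X - {s, t}. if e = anchor_edge s t y0 x then c else 0)"

lemma anchor_weights_nonzero:
  assumes "anchor_weights s t y0 X c e \<noteq> 0"
  shows "\<exists>x \<in> X - {s, t}. e = anchor_edge s t y0 x"
proof (rule ccontr)
  assume "\<not> ?thesis"
  then have "anchor_weights s t y0 X c e = 0"
    unfolding anchor_weights_def by (intro sum.neutral) auto
  with assms show False by contradiction
qed

lemma anchor_weights_support:
  assumes "X \<subseteq> {..<n}" "anchor_weights s t y0 X c e \<noteq> 0"
  shows "e \<in> dom_pairs n s t"
proof -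
  obtain x where x: "x \<in> X - {s, t}" "e = anchor_edge s t y0 x"
    using anchor_weights_nonzero[OF assms(2)] by blast
  have "(if y0 x = 1 then s else t) \<in> {s, t}" "x < n" "x \<notin> {s, t}"
    using assms(1) x(1) by auto
  with x(2) show ?thesis
    unfolding dom_pairs_def anchor_edge_def by blast
qed

lemma l1norm_anchor_weights:
  assumes "finite X"
  shows "l1norm n (anchor_weights s t y0 X c) \<le> \<bar>c\<bar> * card X"
proof -
  let ?g = "\<lambda>x e. if e = anchor_edge s t y0 x then \<bar>c\<bar> else 0"
  have "l1norm n (anchor_weights s t y0 X c) \<le> (\<Sum>e\<in>pairs n. \<Sum>x\<in>X - {s, t}. ?g x e)"
    unfolding l1norm_def anchor_weights_def
    by (intro sum_mono order.trans[OF sum_abs]) simp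
  also have "\<dots> = (\<Sum>x\<in>X - {s, t}. \<Sum>e\<in>pairs n. ?g x e)"
    by (rule sum.swap)
  also have "\<dots> \<le> (\<Sum>x\<in>X - {s, t}. \<bar>c\<bar>)"
    using finite_pairs[of n] by (intro sum_mono) simp
  also have "\<dots> \<le> \<bar>c\<bar> * card X"
    using card_mono[OF assms Diff_subset, of "{s, t}"] by (simp add: mult.commute mult_left_mono)
  finally show ?thesis .
qed

lemma cut_cost_anchor_edge:
  assumes "y0 \<in> cuts n s t" "y \<in> cuts n s t" "s < n" "t < n" "x < n" "x \<notin> {s, t}"
  shows "cut_cost n (\<lambda>e. if e = anchor_edge s t y0 x then c else 0) y = c * (1 - y0 x * y x)"
proof -
  let ?p = "if y0 x = 1 then s else t"
  have "y ?p = y0 x"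
    using cuts_values(1)[OF assms(1,5)] cuts_values(2,3)[OF assms(2)] by auto
  moreover have "cut_cost n (\<lambda>e. if e = anchor_edge s t y0 x then c else 0) y =
      c * (1 - y ?p * y x)"
    unfolding anchor_edge_def
    by (rule cut_cost_single_edge) (use assms(3-6) in \<open>auto split: if_splits\<close>)
  ultimately show ?thesis by simp
qed

text \<open>The vertices s and t need no anchor: every cut agrees with y0 on them.\<close>
lemma cut_cost_anchor_weights:
  assumes "y0 \<in> cuts n s t" "y \<in> cuts n s t" "s < n" "t < n" "finite X" "X \<subseteq> {..<n}"
  shows "cut_cost n (anchor_weights s t y0 X c) y = c * (\<Sum>x\<in>X. 1 - y0 x * y x)"
proof -
  have "cut_cost n (anchor_weights s t y0 X c) y = (\<Sum>x\<in>X - {s, t}. c * (1 - y0 x * y x))"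
    unfolding anchor_weights_def cut_cost_sum
    using assms(6) by (intro sum.cong refl cut_cost_anchor_edge[OF assms(1-4)]) auto
  also have "\<dots> = (\<Sum>x\<in>X. c * (1 - y0 x * y x))"
    using assms(5) cuts_values(2,3)[OF assms(1)] cuts_values(2,3)[OF assms(2)]
    by (intro sum.mono_neutral_left) auto
  finally show ?thesis by (simp add: sum_distrib_left)
qed

definition correction :: "nat \<Rightarrow> nat \<Rightarrow> (nat \<Rightarrow> real) \<Rightarrow> nat set \<Rightarrow> real \<Rightarrow> nat set \<Rightarrow> real" where
  "correction s t y0 E z =
    (if (0 \<le> z) = (\<exists>a\<in>E. \<exists>b\<in>E. y0 a \<noteq> y0 b) then anchor_weights s t y0 E \<bar>z\<bar> else (\<lambda>_. 0))"

lemma correction_support: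
  assumes "E \<subseteq> {..<n}" "correction s t y0 E z e \<noteq> 0"
  shows "e \<in> dom_pairs n s t"
  using assms anchor_weights_support[OF assms(1)] unfolding correction_def
  by (simp split: if_split_asm)

lemma l1norm_correction:
  assumes "finite E"
  shows "l1norm n (correction s t y0 E z) \<le> \<bar>z\<bar> * card E"
  using l1norm_anchor_weights[OF assms, of n s t y0 "\<bar>z\<bar>"] unfolding correction_def
  by (simp add: l1norm_def)

lemma cut_cost_correction:
  assumes "y0 \<in> cuts n s t" "y \<in> cuts n s t" "s < n" "t < n" "finite E" "E \<subseteq> {..<n}"
  shows "cut_cost n (correction s t y0 E z) y =
    (if (0 \<le> z) = (\<exists>a\<in>E. \<exists>b\<in>E. y0 a \<noteq> y0 b) then \<bar>z\<bar> * (\<Sum>x\<in>E. 1 - y0 x * y x) else 0)"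
proof (cases "(0 \<le> z) = (\<exists>a\<in>E. \<exists>b\<in>E. y0 a \<noteq> y0 b)")
  case True
  show ?thesis
    unfolding correction_def if_P[OF True] by (rule cut_cost_anchor_weights[OF assms])
next
  case False
  show ?thesis
    unfolding correction_def if_not_P[OF False] by (simp add: cut_cost_def)
qed

lemma pm1_penalty_dominates:
  fixes a b a0 b0 z :: real
  assumes "a = 1 \<or> a = -1" "b = 1 \<or> b = -1" "a0 = 1 \<or> a0 = -1" "b0 = 1 \<or> b0 = -1"
  shows "z * (1 - a0 * b0) \<le>
    z * (1 - a * b) + (if (0 \<le> z) = (a0 \<noteq> b0) then \<bar>z\<bar> * ((1 - a0 * a) + (1 - b0 * b)) else 0)"
  using assms by (cases "0 \<le> z") (auto simp: abs_if)

theorem lemma5p2: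
  fixes n s t :: nat
  assumes "n \<ge> 3" and "s < n" and "t < n" and "s \<noteq> t"
  shows "\<exists>A :: (nat \<Rightarrow> real) \<Rightarrow> nat set \<Rightarrow> real \<Rightarrow> (nat set \<Rightarrow> real).
    \<forall>w y0 u v z.
      argmin_cuts n s t w = {y0} \<longrightarrow> u < n \<longrightarrow> v < n \<longrightarrow> u \<noteq> v \<longrightarrow>
      -1 \<le> z \<longrightarrow> z \<le> 1 \<longrightarrow>
      (\<forall>e \<in> pairs n. A y0 {u, v} z e \<noteq> 0 \<longrightarrow> e \<in> dom_pairs n s t) \<and>
      l1norm n (A y0 {u, v} z) \<le> 2 \<and>
      argmin_cuts n s t (\<lambda>e. (w({u, v} := w {u, v} + z)) e + A y0 {u, v} z e) = {y0}"
proof (intro exI[of _ "correction s t"] allI impI conjI ballI)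
  fix w y0 u v and z :: real
  assume opt: "argmin_cuts n s t w = {y0}" and uv: "u < n" "v < n" "u \<noteq> v"
    and z: "-1 \<le> z" "z \<le> 1"
  let ?C = "correction s t y0 {u, v} z"
  let ?w' = "\<lambda>e. (w({u, v} := w {u, v} + z)) e + ?C e"
  have uvn: "{u, v} \<subseteq> {..<n}" using uv by auto
  show "e \<in> dom_pairs n s t" if "?C e \<noteq> 0" for e
    by (rule correction_support[OF uvn that])
  show "l1norm n ?C \<le> 2"
    using l1norm_correction[of "{u, v}" n s t y0 z] uv z by (simp add: abs_le_iff)
  have y0: "y0 \<in> cuts n s t" using opt unfolding argmin_cuts_def by auto
  have "w({u, v} := w {u, v} + z) = (\<lambda>e. w e + (if e = {u, v} then z else 0))" by auto
  then have cost: "cut_cost n ?w' y - cut_cost n w y =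
      z * (1 - y u * y v) + (if (0 \<le> z) = (y0 u \<noteq> y0 v)
        then \<bar>z\<bar> * ((1 - y0 u * y u) + (1 - y0 v * y v)) else 0)"
    if "y \<in> cuts n s t" for y
    using cut_cost_correction[OF y0 that assms(2,3) _ uvn, of z]
      cut_cost_single_edge[OF uv(3,1,2), of z y] uv(3)
    by (simp add: cut_cost_add)
  show "argmin_cuts n s t ?w' = {y0}"
  proof (rule argmin_cuts_add_penalty[OF opt])
    fix y assume y: "y \<in> cuts n s t"
    have "y0 u * y0 u = 1" "y0 v * y0 v = 1"
      using cuts_values(1)[OF y0 uv(1)] cuts_values(1)[OF y0 uv(2)] by auto
    then have "cut_cost n ?w' y0 - cut_cost n w y0 = z * (1 - y0 u * y0 v)"
      unfolding cost[OF y0] by simp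
    also have "\<dots> \<le> cut_cost n ?w' y - cut_cost n w y"
      unfolding cost[OF y]
      by (intro pm1_penalty_dominates cuts_values(1)[OF y] cuts_values(1)[OF y0] uv)
    finally show "cut_cost n ?w' y0 - cut_cost n w y0 \<le> cut_cost n ?w' y - cut_cost n w y" .
  qed
qed

end
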